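(* The following hold. (1) $\alpha_*(\Sigma^* )=\mathcal Q$ and $\alpha_{\le\omega}(\Sigma^{\le\omega})=\mathcal C$ (top elements are preserved); $\alpha_*(\emptyset)=\emptyset$ and $\alpha_{\le\omega}(\emptyset)=\emptyset$. (2) For $U,U'\subseteq\Sigma^*$ and $V,V'\subseteq\Sigma^{\le\omega}$: $\alpha_*(U\cup U')=\alpha_*(U)\cup\alpha_*(U')$ and $\alpha_{\le\omega}(V\cup V')=\alpha_{\le\omega}(V)\cup\alpha_{\le\omega}(V')$. (3) $\alpha_*(U\cdot U')=\alpha_*(U)\cdot\alpha_*(U')$ and $\alpha_{\le\omega}(U\cdot V)=\alpha_*(U)\cdot\alpha_{\le\omega}(V)$. (4) If $n\ge1$, $\Phi$ is a monotone operator on $\mathcal P(\Sigma^* )^n$, $F$ is a monotone operator on $\mathcal M_*^n$, and $\alpha_*\circ\Phi=F\circ\alpha_*$ (with $\alpha_*$ applied componentwise), then $\alpha_*(\mathrm{lfp}(\Phi))=\mathrm{lfp}(F)$. (5) For every $U\subseteq\Sigma^*$: $\alpha_{\le\omega}(U^\omega)=\alpha_*(U)^\omega$.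
   Context: $\Sigma$ is a finite alphabet, $\Sigma^{\le\omega}=\Sigma^*\cup\Sigma^\omega$; concatenation $w\cdot u$ equals $wu$ if $w$ is finite and $w$ if $w$ is infinite, extended pointwise to languages. For $A\subseteq\Sigma^*$, $A^\omega$ is the set of all words $w_0w_1w_2\cdots$ with $w_i\in A$, and $CD^\omega$ means $C\cdot D^\omega$. Fix an extended Büchi automaton $\mathfrak A=(Q,\Sigma,\delta,q_0,F)$ (finite states, $\delta:Q\times\Sigma\to\mathcal P(Q)$, initial $q_0$, final $F$). For $w\in\Sigma^*$ write $p\overset{w}{\leadsto}q$ if $q$ is reachable from $p$ reading $w$, and $p\overset{w}{\leadsto}_F q$ if there are $q''\in F$, $w=uv$ with $p\overset{u}{\leadsto}q''\overset{v}{\leadsto}q$. For $w,u\in\Sigma^+$, $w\sim u$ iff for all $p,q$: $p\overset{w}{\leadsto}q\Leftrightarrow p\overset{u}{\leadsto}q$ and $p\overset{w}{\leadsto}_Fq\Leftrightarrow p\overset{u}{\leadsto}_Fq$. $\mathcal Q=\Sigma^+/{\sim}\uplus\{[\epsilon]\}$ with $[\epsilon]=\{\epsilon\}$; concatenation of classes is well defined. Let $\mathcal C=\{(C,D)\mid C,D\in\mathcal Q,\ CD=C,\ DD=D\}$. Define $\mathfrak f(V)=\{(C,D)\in\mathcal C\mid CD^\omega\cap V\neq\emptyset\}$ and $\mathfrak g(\mathcal V)=\bigcup_{(C,D)\in\mathcal V}CD^\omega$; closure $\mathfrak c(\mathcal V)=\bigcup_{n\ge1}(\mathfrak f\circ\mathfrak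 g)^n(\mathcal V)$. $\mathcal M_{\le\omega}=\{\mathfrak c(\mathfrak f(V))\mid V\subseteq\Sigma^{\le\omega}\}$, $\mathcal M_*=\mathcal P(\mathcal Q)$, ordered by inclusion. $\alpha_*(U)=\{C\in\mathcal Q\mid C\cap U\neq\emptyset\}$, $\alpha_{\le\omega}(V)=\mathfrak c(\mathfrak f(V))$, $\gamma_*(\mathcal U)=\bigcup_{C\in\mathcal U}C$, $\gamma_{\le\omega}(\mathcal V)=\mathfrak g(\mathcal V)$. Abstract operations: for $\mathcal U,\mathcal U'\in\mathcal M_*$, $\mathcal U\cdot\mathcal U'=\{CC'\mid C\in\mathcal U,C'\in\mathcal U'\}$; for $\mathcal U\in\mathcal M_*$, $\mathcal V\in\mathcal M_{\le\omega}$, $\mathcal U\cdot\mathcal V=\{(AC,D)\mid A\in\mathcal U,(C,D)\in\mathcal V\}$; for $\mathcal U\in\mathcal M_*$, $\mathcal U^\omega:=\alpha_{\le\omega}(\gamma_*(\mathcal U)^\omega)$. *)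

theory Defs
  imports Main
begin

datatype 'a fiword = FinW "'a list" | InfW "nat \<Rightarrow> 'a"

fun wcat :: "'a fiword \<Rightarrow> 'a fiword \<Rightarrow> 'a fiword" where
  "wcat (FinW u) (FinW v) = FinW (u @ v)"
| "wcat (FinW u) (InfW x) = InfW (\<lambda>k. if k < length u then u ! k else x (k - length u))"
| "wcat (InfW x) _ = InfW x"

definition lmul :: "'a list set \<Rightarrow> 'a list set \<Rightarrow> 'a list set" where
  "lmul U U' = {u @ v | u v. u \<in> U \<and> v \<in> U'}"

definition lconc :: "'a list set \<Rightarrow> 'a fiword set \<Rightarrow> 'a fiword set" where
  "lconc U V = {wcat (FinW u) v | u v. u \<in> U \<and> v \<in> V}"

definition pconc :: "(nat \<Rightarrow> 'a list) \<Rightarrow> nat \<Rightarrow> 'a list" where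
  "pconc ws n = concat (map ws [0..<n])"

definition inf_concat :: "(nat \<Rightarrow> 'a list) \<Rightarrow> 'a fiword" where
  "inf_concat ws =
     (if \<exists>n. \<forall>i\<ge>n. ws i = []
      then FinW (pconc ws (LEAST n. \<forall>i\<ge>n. ws i = []))
      else InfW (\<lambda>k. pconc ws (LEAST n. k < length (pconc ws n)) ! k))"

definition omega_pow :: "'a list set \<Rightarrow> 'a fiword set" where
  "omega_pow A = {inf_concat ws | ws. \<forall>i. ws i \<in> A}"

fun steps :: "('s \<Rightarrow> 'a \<Rightarrow> 's set) \<Rightarrow> 's \<Rightarrow> 'a list \<Rightarrow> 's set" where
  "steps d p [] = {p}"
| "steps d p (a # w) = (\<Union>q\<in>d p a. steps d q w)"

definition reach :: "('s \<Rightarrow> 'a \<Rightarrow> 's set) \<Rightarrow> 's \<Rightarrow> 'a list \<Rightarrow> 's \<Rightarrow> bool" where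
  "reach d p w q \<longleftrightarrow> q \<in> steps d p w"

definition reachF :: "('s \<Rightarrow> 'a \<Rightarrow> 's set) \<Rightarrow> 's set \<Rightarrow> 's \<Rightarrow> 'a list \<Rightarrow> 's \<Rightarrow> bool" where
  "reachF d Fs p w q \<longleftrightarrow>
     (\<exists>u v q''. w = u @ v \<and> q'' \<in> Fs \<and> reach d p u q'' \<and> reach d q'' v q)"

definition sim :: "('s \<Rightarrow> 'a \<Rightarrow> 's set) \<Rightarrow> 's set \<Rightarrow> 'a list \<Rightarrow> 'a list \<Rightarrow> bool" where
  "sim d Fs w u \<longleftrightarrow>
     (\<forall>p q. (reach d p w q \<longleftrightarrow> reach d p u q) \<and> (reachF d Fs p w q \<longleftrightarrow> reachF d Fs p u q))"

definition cls :: "('s \<Rightarrow> 'a \<Rightarrow> 's set) \<Rightarrow> 's set \<Rightarrow> 'a list \<Rightarrow> 'a list set" where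
  "cls d Fs w = (if w = [] then {[]} else {u. u \<noteq> [] \<and> sim d Fs w u})"

definition Qc :: "('s \<Rightarrow> 'a \<Rightarrow> 's set) \<Rightarrow> 's set \<Rightarrow> 'a list set set" where
  "Qc d Fs = range (cls d Fs)"

text \<open>Concatenation of classes (well defined: the class of uv for representatives u, v).\<close>
definition cmul :: "('s \<Rightarrow> 'a \<Rightarrow> 's set) \<Rightarrow> 's set \<Rightarrow> 'a list set \<Rightarrow> 'a list set \<Rightarrow> 'a list set" where
  "cmul d Fs C D = cls d Fs ((SOME u. u \<in> C) @ (SOME v. v \<in> D))"

definition Cpairs :: "('s \<Rightarrow> 'a \<Rightarrow> 's set) \<Rightarrow> 's set \<Rightarrow> ('a list set \<times> 'a list set) set" where
  "Cpairs d Fs = {(C, D). C \<in> Qc d Fs \<and> D \<in> Qc d Fs \<and> cmul d Fs C D = C \<and> cmul d Fs D D = D}"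

definition ff :: "('s \<Rightarrow> 'a \<Rightarrow> 's set) \<Rightarrow> 's set \<Rightarrow> 'a fiword set \<Rightarrow> ('a list set \<times> 'a list set) set" where
  "ff d Fs V = {(C, D) \<in> Cpairs d Fs. lconc C (omega_pow D) \<inter> V \<noteq> {}}"

definition gg :: "('a list set \<times> 'a list set) set \<Rightarrow> 'a fiword set" where
  "gg \<V> = (\<Union>(C, D)\<in>\<V>. lconc C (omega_pow D))"

definition cc :: "('s \<Rightarrow> 'a \<Rightarrow> 's set) \<Rightarrow> 's set \<Rightarrow> ('a list set \<times> 'a list set) set \<Rightarrow> ('a list set \<times> 'a list set) set" where
  "cc d Fs \<V> = (\<Union>n\<in>{1..}. ((ff d Fs \<circ> gg) ^^ n) \<V>)"

definition alpha_star :: "('s \<Rightarrow> 'a \<Rightarrow> 's set) \<Rightarrow> 's set \<Rightarrow> 'a list set \<Rightarrow> 'a list set set" where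
  "alpha_star d Fs U = {C \<in> Qc d Fs. C \<inter> U \<noteq> {}}"

definition alpha_om :: "('s \<Rightarrow> 'a \<Rightarrow> 's set) \<Rightarrow> 's set \<Rightarrow> 'a fiword set \<Rightarrow> ('a list set \<times> 'a list set) set" where
  "alpha_om d Fs V = cc d Fs (ff d Fs V)"

definition gamma_star :: "'a list set set \<Rightarrow> 'a list set" where
  "gamma_star \<U> = \<Union>\<U>"

definition gamma_om :: "('a list set \<times> 'a list set) set \<Rightarrow> 'a fiword set" where
  "gamma_om \<V> = gg \<V>"

definition M_star :: "('s \<Rightarrow> 'a \<Rightarrow> 's set) \<Rightarrow> 's set \<Rightarrow> 'a list set set set" where
  "M_star d Fs = Pow (Qc d Fs)"

definition M_om :: "('s \<Rightarrow> 'a \<Rightarrow> 's set) \<Rightarrow> 's set \<Rightarrow> ('a list set \<times> 'a list set) set set" where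
  "M_om d Fs = range (alpha_om d Fs)"

definition amul :: "('s \<Rightarrow> 'a \<Rightarrow> 's set) \<Rightarrow> 's set \<Rightarrow> 'a list set set \<Rightarrow> 'a list set set \<Rightarrow> 'a list set set" where
  "amul d Fs \<U> \<U>' = {cmul d Fs C C' | C C'. C \<in> \<U> \<and> C' \<in> \<U>'}"

definition amul_om :: "('s \<Rightarrow> 'a \<Rightarrow> 's set) \<Rightarrow> 's set \<Rightarrow> 'a list set set
    \<Rightarrow> ('a list set \<times> 'a list set) set \<Rightarrow> ('a list set \<times> 'a list set) set" where
  "amul_om d Fs \<U> \<V> = {(cmul d Fs A C, D) | A C D. A \<in> \<U> \<and> (C, D) \<in> \<V>}"

definition aomega :: "('s \<Rightarrow> 'a \<Rightarrow> 's set) \<Rightarrow> 's set \<Rightarrow> 'a list set set \<Rightarrow> ('a list set \<times> 'a list set) set" where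
  "aomega d Fs \<U> = alpha_om d Fs (omega_pow (gamma_star \<U>))"

end

theory Submission
  imports Defs "HOL-Library.Omega_Words_Fun" "HOL-Library.Ramsey"
begin

text \<open>
  Two nonempty words are equivalent iff they induce the same two relations on states
  (reachability, and reachability through a final state). These relations compose under
  concatenation, so the classes form a finite monoid, and the identities for \<open>\<alpha>\<^sub>*\<close> are direct;
  the least fixed point identity is the transfer of \<open>lfp\<close> along the Galois connection
  \<open>\<alpha>\<^sub>* \<dashv> \<gamma>\<^sub>*\<close>.

  For \<open>\<alpha>\<^sub>\<le>\<^sub>\<omega>\<close> everything rests on lassos \<open>CD\<^sup>\<omega>\<close> with \<open>(C, D) \<in> \<C>\<close>. If \<open>uv \<in> CD\<^sup>\<omega>\<close>
  then \<open>C = [u]C'\<close> with \<open>(C', D) \<in> \<C>\<close> and \<open>v \<in> C'D\<^sup>\<omega>\<close>; together with closure of lassos under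
  prefixing, this makes the overlap closure \<open>c\<close> commute with left multiplication by a class,
  which is the concatenation identity. For the \<omega>-power, a factor \<open>w\<^sub>i\<close> taken from
  \<open>\<gamma>\<^sub>*(\<alpha>\<^sub>* U)\<close> may be replaced by an equivalent \<open>u\<^sub>i \<in> U\<close>: by Ramsey's theorem the blocks
  between consecutive elements of some infinite index set all have one class \<open>D\<close>, necessarily
  idempotent, so \<open>w\<^sub>0w\<^sub>1\<dots>\<close> and \<open>u\<^sub>0u\<^sub>1\<dots>\<close> lie in a common lasso.
\<close>

section \<open>Ramsey's theorem for pairs and fixed point transfer\<close>

lemma ramsey_pairs_nat:
  fixes c :: "nat \<Rightarrow> nat \<Rightarrow> 'b"
  assumes "finite S" "\<And>i j. c i j \<in> S"
  obtains e :: "nat \<Rightarrow> nat" where "strict_mono e" "\<And>i j. i < j \<Longrightarrow> c (e i) (e j) = c (e 0) (e 1)"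
proof -
  obtain h where h: "bij_betw h S {0..<card S}"
    using ex_bij_betw_finite_nat[OF assms(1)] by blast
  define col where "col X = h (c (Min X) (Max X))" for X :: "nat set"
  have "h (c i j) < card S" for i j
    using bij_betwE[OF h] assms(2) by simp
  then have col_bound: "\<forall>x\<in>UNIV. \<forall>y\<in>UNIV. x \<noteq> y \<longrightarrow> col {x, y} < card S"
    unfolding col_def by blast
  obtain Y t where Y: "infinite Y" "\<forall>x\<in>Y. \<forall>y\<in>Y. x \<noteq> y \<longrightarrow> col {x, y} = t"
    using Ramsey2[OF infinite_UNIV_nat col_bound] by blast
  define e where "e = enumerate Y"
  have e: "strict_mono e"
    unfolding e_def using enumerate_mono[OF _ Y(1)] by (simp add: strict_mono_def)
  have "h (c (e i) (e j)) = t" if "i < j" for i j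
  proof -
    have "e i < e j" using e that by (simp add: strict_mono_less)
    moreover have "e i \<in> Y" "e j \<in> Y" unfolding e_def by (simp_all add: enumerate_in_set Y(1))
    ultimately show ?thesis using Y(2) by (force simp: col_def)
  qed
  then have "c (e i) (e j) = c (e 0) (e 1)" if "i < j" for i j
    using that h assms(2) unfolding bij_betw_def inj_on_def by (metis zero_less_one)
  with e show thesis by (rule that)
qed

lemma lfp_abstraction:
  fixes \<alpha> :: "'a::complete_lattice \<Rightarrow> 'b::complete_lattice"
  assumes "mono \<Phi>" and "mono_on M F" and in_M: "\<And>x. \<alpha> x \<in> M"
    and galois: "\<And>x y. y \<in> M \<Longrightarrow> \<alpha> x \<le> y \<longleftrightarrow> x \<le> \<gamma> y"
    and comm: "\<And>x. \<alpha> (\<Phi> x) = F (\<alpha> x)"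
  shows "\<alpha> (lfp \<Phi>) = Inf {y \<in> M. F y \<le> y}"
proof (rule antisym)
  have "F (\<alpha> (lfp \<Phi>)) = \<alpha> (lfp \<Phi>)"
    using comm lfp_unfold[OF assms(1)] by metis
  then show "Inf {y \<in> M. F y \<le> y} \<le> \<alpha> (lfp \<Phi>)"
    using in_M by (intro Inf_lower) simp
  show "\<alpha> (lfp \<Phi>) \<le> Inf {y \<in> M. F y \<le> y}"
  proof (rule Inf_greatest)
    fix y assume y: "y \<in> {y \<in> M. F y \<le> y}"
    have "\<alpha> (\<gamma> y) \<le> y" using galois y by blast
    then have "\<alpha> (\<Phi> (\<gamma> y)) \<le> y"
      using comm mono_onD[OF assms(2) in_M] y by (metis (no_types, lifting) mem_Collect_eq order_trans)
    then have "lfp \<Phi> \<le> \<gamma> y" using galois y by (blast intro: lfp_lowerbound)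
    then show "\<alpha> (lfp \<Phi>) \<le> y" using galois y by blast
  qed
qed

section \<open>Finite and infinite words\<close>

lemma wcat_FinW_InfW [simp]: "wcat (FinW u) (InfW h) = InfW (u \<frown> h)"
  by (simp add: conc_def)

(* Keep infinite words in the form InfW (u \<frown> h), for which Omega_Words_Fun has the lemmas. *)
declare wcat.simps(2) [simp del]

lemma wcat_assoc: "wcat (FinW u) (wcat (FinW v) w) = wcat (FinW (u @ v)) w"
  by (cases w) simp_all

lemma wcat_FinW_eq_InfW_conc:
  assumes eq: "wcat (FinW u) v = InfW (y \<frown> h)" and len: "length u \<le> length y"
  obtains s where "y = u @ s" "v = InfW (s \<frown> h)"
proof -
  obtain h' where v: "v = InfW h'" using eq by (cases v) auto
  define s where "s = drop (length u) y"
  have "u \<frown> h' = take (length u) y \<frown> (s \<frown> h)"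
    using eq by (simp add: v s_def)
  moreover have "length u = length (take (length u) y)"
    using len by simp
  ultimately have "u = take (length u) y" "h' = s \<frown> h"
    using concat_eq by blast+
  then show thesis using that v s_def by (metis append_take_drop_id)
qed

definition concat_upt :: "(nat \<Rightarrow> 'a list) \<Rightarrow> nat \<Rightarrow> nat \<Rightarrow> 'a list" where
  "concat_upt ws i j = concat (map ws [i..<j])"

lemma pconc_eq_concat_upt: "pconc ws n = concat_upt ws 0 n"
  by (simp add: pconc_def concat_upt_def)

lemma concat_upt_split:
  "i \<le> j \<Longrightarrow> j \<le> k \<Longrightarrow> concat_upt ws i k = concat_upt ws i j @ concat_upt ws j k"
  unfolding concat_upt_def by (metis concat_append map_append le_Suc_ex upt_add_eq_append)

lemma pconc_0 [simp]: "pconc ws 0 = []"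
  by (simp add: pconc_def)

lemma pconc_Suc: "pconc ws (Suc n) = pconc ws n @ ws n"
  by (simp add: pconc_def)

lemma pconc_add: "pconc ws (m + n) = pconc ws m @ pconc (\<lambda>i. ws (m + i)) n"
  by (induction n) (simp_all add: pconc_Suc pconc_def)

lemma pconc_prefix: "m \<le> n \<Longrightarrow> \<exists>r. pconc ws n = pconc ws m @ r"
  by (metis le_Suc_ex pconc_add)

lemma frequently_nonempty_iff_unbounded:
  "(\<exists>\<^sub>\<infinity>i. ws i \<noteq> []) \<longleftrightarrow> (\<forall>k. \<exists>n. k < length (pconc ws n))"
proof
  assume inf: "\<exists>\<^sub>\<infinity>i. ws i \<noteq> []"
  show "\<forall>k. \<exists>n. k < length (pconc ws n)"
  proof
    fix k show "\<exists>n. k < length (pconc ws n)"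
    proof (induction k)
      case 0
      obtain i where "ws i \<noteq> []" using inf by (auto simp: INFM_nat_le)
      then show ?case by (auto simp: pconc_Suc intro!: exI[of _ "Suc i"])
    next
      case (Suc k)
      then obtain n where n: "k < length (pconc ws n)" by blast
      obtain i where i: "i \<ge> n" "ws i \<noteq> []" using inf by (auto simp: INFM_nat_le)
      obtain r where "pconc ws i = pconc ws n @ r" using pconc_prefix i(1) by blast
      then have "length (pconc ws (Suc i)) = length (pconc ws n) + length r + length (ws i)"
        by (simp add: pconc_Suc)
      moreover have "0 < length (ws i)" using i(2) by simp
      ultimately show ?case using n by (intro exI[of _ "Suc i"]) linarith
    qed
  qed
next
  assume unb: "\<forall>k. \<exists>n. k < length (pconc ws n)"
  show "\<exists>\<^sub>\<infinity>i. ws i \<noteq> []"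
  proof (rule ccontr)
    assume "\<not> (\<exists>\<^sub>\<infinity>i. ws i \<noteq> [])"
    then obtain N where N: "\<forall>i\<ge>N. ws i = []" by (auto simp: INFM_nat_le)
    have "pconc ws (N + k) = pconc ws N" for k
      by (induction k) (simp_all add: pconc_Suc N)
    then have "length (pconc ws n) \<le> length (pconc ws N)" for n
      using pconc_prefix[of n N ws] by (metis le_Suc_ex nat_le_linear order_refl length_append le_add1)
    then show False using unb leD by blast
  qed
qed

lemma prefix_eq_imp_eq:
  assumes "\<forall>k. \<exists>n. k < b n" "\<forall>n. prefix (b n) g = prefix (b n) h"
  shows "g = h"
proof
  fix k
  obtain n where "k < b n" using assms(1) by blast
  moreover have "prefix (b n) g ! k = prefix (b n) h ! k" using assms(2) by simp
  ultimately show "g k = h k" by simp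
qed

lemma inf_concat_InfWE:
  assumes "\<exists>\<^sub>\<infinity>i. ws i \<noteq> []"
  obtains g where "inf_concat ws = InfW g" "\<forall>n. prefix (length (pconc ws n)) g = pconc ws n"
proof
  define g where "g = (\<lambda>k. pconc ws (LEAST n. k < length (pconc ws n)) ! k)"
  show "inf_concat ws = InfW g"
    using assms by (simp add: inf_concat_def g_def INFM_nat_le not_le)
  show "\<forall>n. prefix (length (pconc ws n)) g = pconc ws n"
  proof (intro allI nth_equalityI)
    fix n k assume "k < length (prefix (length (pconc ws n)) g)"
    then have k: "k < length (pconc ws n)" by simp
    let ?m = "LEAST n. k < length (pconc ws n)"
    have "?m \<le> n" "k < length (pconc ws ?m)"
      using k by (auto intro: Least_le LeastI)
    moreover obtain r where "pconc ws n = pconc ws ?m @ r"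
      using pconc_prefix calculation(1) by blast
    ultimately show "prefix (length (pconc ws n)) g ! k = pconc ws n ! k"
      using k by (simp add: g_def nth_append)
  qed simp
qed

lemma inf_concat_eq_InfW_iff:
  assumes "\<exists>\<^sub>\<infinity>i. ws i \<noteq> []"
  shows "inf_concat ws = InfW g \<longleftrightarrow> (\<forall>n. prefix (length (pconc ws n)) g = pconc ws n)"
proof -
  obtain h where h: "inf_concat ws = InfW h" "\<forall>n. prefix (length (pconc ws n)) h = pconc ws n"
    by (rule inf_concat_InfWE[OF assms])
  have "g = h" if "\<forall>n. prefix (length (pconc ws n)) g = pconc ws n"
    using prefix_eq_imp_eq[of "\<lambda>n. length (pconc ws n)" g h] that h(2) assms
    by (simp add: frequently_nonempty_iff_unbounded)
  then show ?thesis using h by auto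
qed

lemma frequently_nonempty_shift:
  fixes ws :: "nat \<Rightarrow> 'a list"
  assumes "\<exists>\<^sub>\<infinity>i. ws i \<noteq> []"
  shows "\<exists>\<^sub>\<infinity>i. ws (n + i) \<noteq> []"
  unfolding INFM_nat_le
proof
  fix m
  obtain i where "n + m \<le> i" "ws i \<noteq> []" using assms unfolding INFM_nat_le by blast
  then show "\<exists>i\<ge>m. ws (n + i) \<noteq> []" by (intro exI[of _ "i - n"]) auto
qed

lemma inf_concat_shift:
  assumes inf: "\<exists>\<^sub>\<infinity>i. ws i \<noteq> []"
  shows "inf_concat ws = wcat (FinW (pconc ws n)) (inf_concat (\<lambda>i. ws (n + i)))"
proof -
  obtain h where h: "inf_concat (\<lambda>i. ws (n + i)) = InfW h"
    "\<forall>k. prefix (length (pconc (\<lambda>i. ws (n + i)) k)) h = pconc (\<lambda>i. ws (n + i)) k"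
    by (rule inf_concat_InfWE[OF frequently_nonempty_shift[OF inf]])
  have "prefix (length (pconc ws m)) (pconc ws n \<frown> h) = pconc ws m" for m
  proof (cases "m \<le> n")
    case True
    then obtain r where "pconc ws n = pconc ws m @ r" using pconc_prefix by blast
    then show ?thesis by simp
  next
    case False
    then obtain k where "m = n + k" by (metis le_Suc_ex nat_le_linear)
    then show ?thesis using h(2) by (simp add: pconc_add)
  qed
  then show ?thesis using h(1) inf by (simp add: inf_concat_eq_InfW_iff)
qed

lemma inf_concat_split_prefix:
  assumes "\<forall>i. ys i \<noteq> []" and eq: "wcat (FinW u) v = wcat (FinW x) (inf_concat ys)"
  obtains n s where "x @ pconc ys n = u @ s"
    "v = wcat (FinW (s @ ys n)) (inf_concat (\<lambda>i. ys (Suc n + i)))"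
proof -
  have inf: "\<exists>\<^sub>\<infinity>i. ys i \<noteq> []" using assms(1) by (simp add: INFM_nat_le)
  obtain n where n: "length u < length (pconc ys n)"
    using inf frequently_nonempty_iff_unbounded by blast
  obtain h where h: "inf_concat (\<lambda>i. ys (Suc n + i)) = InfW h"
    by (rule inf_concat_InfWE[OF frequently_nonempty_shift[OF inf]])
  have "wcat (FinW u) v = InfW ((x @ pconc ys n) \<frown> (ys n \<frown> h))"
    using eq inf_concat_shift[OF inf, of "Suc n"] h by (simp add: pconc_Suc)
  then obtain s where "x @ pconc ys n = u @ s" "v = InfW (s \<frown> (ys n \<frown> h))"
    using n by (elim wcat_FinW_eq_InfW_conc) simp
  then show thesis using that h by simp
qed

lemma pconc_concat_upt_blocks:
  assumes "mono f" "f 0 = 0"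
  shows "pconc (\<lambda>i. concat_upt ws (f i) (f (Suc i))) n = pconc ws (f n)"
proof (induction n)
  case 0 then show ?case using assms(2) by simp
next
  case (Suc n)
  have "f n \<le> f (Suc n)" using assms(1) by (simp add: monoD)
  then have "pconc ws (f (Suc n)) = pconc ws (f n) @ concat_upt ws (f n) (f (Suc n))"
    using concat_upt_split[of 0 "f n" "f (Suc n)" ws] by (simp add: pconc_eq_concat_upt)
  then show ?case using Suc by (simp add: pconc_Suc)
qed

lemma frequently_nonempty_blocks:
  assumes inf: "\<exists>\<^sub>\<infinity>i. ws i \<noteq> []" and f: "strict_mono f" "f 0 = 0"
  shows "\<exists>\<^sub>\<infinity>i. concat_upt ws (f i) (f (Suc i)) \<noteq> []"
  unfolding frequently_nonempty_iff_unbounded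
proof
  fix k
  obtain n where n: "k < length (pconc ws n)"
    using inf frequently_nonempty_iff_unbounded by blast
  obtain r where "pconc ws (f n) = pconc ws n @ r"
    using pconc_prefix strict_mono_imp_increasing[OF f(1)] by blast
  then show "\<exists>n. k < length (pconc (\<lambda>i. concat_upt ws (f i) (f (Suc i))) n)"
    using n f by (intro exI[of _ n]) (simp add: pconc_concat_upt_blocks strict_mono_mono)
qed

lemma inf_concat_blocks:
  assumes inf: "\<exists>\<^sub>\<infinity>i. ws i \<noteq> []" and f: "strict_mono f" "f 0 = 0"
  shows "inf_concat ws = inf_concat (\<lambda>i. concat_upt ws (f i) (f (Suc i)))"
proof -
  obtain g where g: "inf_concat ws = InfW g" "\<forall>n. prefix (length (pconc ws n)) g = pconc ws n"
    by (rule inf_concat_InfWE[OF inf])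
  moreover have "inf_concat (\<lambda>i. concat_upt ws (f i) (f (Suc i))) = InfW g"
    using g(2) f frequently_nonempty_blocks[OF inf f]
    by (simp add: inf_concat_eq_InfW_iff pconc_concat_upt_blocks strict_mono_mono)
  ultimately show ?thesis by simp
qed

lemma inf_concat_regroup:
  fixes e :: "nat \<Rightarrow> nat"
  assumes inf: "\<exists>\<^sub>\<infinity>i. ws i \<noteq> []" and e: "strict_mono e"
  shows "inf_concat ws =
    wcat (FinW (pconc ws (e 1))) (inf_concat (\<lambda>i. concat_upt ws (e (Suc i)) (e (Suc (Suc i)))))"
proof -
  define f where "f i = (if i = 0 then 0 else e i)" for i
  have f: "strict_mono f" "f 0 = 0"
    using e strict_mono_imp_increasing[OF e] unfolding f_def strict_mono_def
    by (auto, metis le_less_trans neq0_conv)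
  let ?zs = "\<lambda>i. concat_upt ws (f i) (f (Suc i))"
  have "inf_concat ws = wcat (FinW (pconc ?zs 1)) (inf_concat (\<lambda>i. ?zs (1 + i)))"
    using inf_concat_blocks[OF inf f] inf_concat_shift[OF frequently_nonempty_blocks[OF inf f], where n = 1]
    by simp
  moreover have "pconc ?zs 1 = pconc ws (e 1)"
    by (simp add: pconc_def concat_upt_def f_def)
  ultimately show ?thesis by (simp add: f_def)
qed

abbreviation lasso :: "'a list set \<Rightarrow> 'a list set \<Rightarrow> 'a fiword set" where
  "lasso C D \<equiv> lconc C (omega_pow D)"

lemma omega_pow_Nil: "omega_pow {[]} = {FinW []}"
proof -
  have "ws = (\<lambda>_. [])" if "\<forall>i. ws i \<in> {[]}" for ws :: "nat \<Rightarrow> 'a list"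
    using that by auto
  moreover have "inf_concat (\<lambda>_. []) = FinW []"
    by (simp add: inf_concat_def pconc_def)
  ultimately show ?thesis unfolding omega_pow_def by (auto intro!: exI[of _ "\<lambda>_. []"])
qed

lemma lasso_Nil: "lasso C {[]} = FinW ` C"
  unfolding lconc_def omega_pow_Nil by auto

section \<open>Classes of words\<close>

lemma steps_append: "steps d p (u @ v) = (\<Union>m\<in>steps d p u. steps d m v)"
  by (induction u arbitrary: p) auto

lemma reach_append: "reach d p (u @ v) q \<longleftrightarrow> (\<exists>m. reach d p u m \<and> reach d m v q)"
  unfolding reach_def steps_append by auto

lemma reachF_append:
  "reachF d Fs p (u @ v) q \<longleftrightarrow>
     (\<exists>m. reachF d Fs p u m \<and> reach d m v q \<or> reach d p u m \<and> reachF d Fs m v q)"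
proof
  assume "reachF d Fs p (u @ v) q"
  then obtain x y f where xy: "u @ v = x @ y" "f \<in> Fs" "reach d p x f" "reach d f y q"
    unfolding reachF_def by blast
  then consider t where "x = u @ t" "v = t @ y" | t where "u = x @ t" "y = t @ v"
    by (auto simp: append_eq_append_conv2)
  then show "\<exists>m. reachF d Fs p u m \<and> reach d m v q \<or> reach d p u m \<and> reachF d Fs m v q"
  proof cases
    case (1 t)
    then obtain m where m: "reach d p u m" "reach d m t f" using xy reach_append by metis
    then have "reachF d Fs m v q" unfolding reachF_def using 1 xy by blast
    then show ?thesis using m by blast
  next
    case (2 t)
    then obtain m where m: "reach d f t m" "reach d m v q" using xy reach_append by metis
    then have "reachF d Fs p u m" unfolding reachF_def using 2 xy by blast
    then show ?thesis using m by blast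
  qed
next
  assume "\<exists>m. reachF d Fs p u m \<and> reach d m v q \<or> reach d p u m \<and> reachF d Fs m v q"
  then obtain m where "reachF d Fs p u m \<and> reach d m v q \<or> reach d p u m \<and> reachF d Fs m v q"
    ..
  then show "reachF d Fs p (u @ v) q"
  proof
    assume m: "reachF d Fs p u m \<and> reach d m v q"
    then obtain x y f where "u = x @ y" "f \<in> Fs" "reach d p x f" "reach d f y m"
      unfolding reachF_def by blast
    moreover have "reach d f (y @ v) q"
      unfolding reach_append using m calculation(4) by blast
    ultimately show ?thesis unfolding reachF_def by (metis append.assoc)
  next
    assume m: "reach d p u m \<and> reachF d Fs m v q"
    then obtain x y f where "v = x @ y" "f \<in> Fs" "reach d m x f" "reach d f y q"
      unfolding reachF_def by blast
    moreover have "reach d p (u @ x) f"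
      unfolding reach_append using m calculation(3) by blast
    ultimately show ?thesis unfolding reachF_def by (metis append.assoc)
  qed
qed

context
  fixes d :: "'s \<Rightarrow> 'a \<Rightarrow> 's set" and Fs :: "'s set"
begin

definition reach_rel :: "'a list \<Rightarrow> ('s \<times> 's) set" where
  "reach_rel w = {(p, q). reach d p w q}"

definition reachF_rel :: "'a list \<Rightarrow> ('s \<times> 's) set" where
  "reachF_rel w = {(p, q). reachF d Fs p w q}"

definition profile :: "'a list \<Rightarrow> (('s \<times> 's) set \<times> ('s \<times> 's) set) option" where
  "profile w = (if w = [] then None else Some (reach_rel w, reachF_rel w))"

lemma reach_rel_append: "reach_rel (u @ v) = reach_rel u O reach_rel v"
  by (auto simp: reach_rel_def reach_append)

lemma reachF_rel_append:
  "reachF_rel (u @ v) = reachF_rel u O reach_rel v \<union> reach_rel u O reachF_rel v"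
  by (auto simp: reach_rel_def reachF_rel_def reachF_append)

lemma profile_eq_None_iff [simp]: "profile w = None \<longleftrightarrow> w = []"
  by (simp add: profile_def)

lemma profile_append_cong:
  assumes "profile u = profile u'" "profile v = profile v'"
  shows "profile (u @ v) = profile (u' @ v')"
proof (cases "u = [] \<or> v = []")
  case True
  then show ?thesis using assms profile_eq_None_iff by (metis append.right_neutral append_Nil)
next
  case False
  then have "u' \<noteq> [] \<and> v' \<noteq> []" using assms profile_eq_None_iff by metis
  then show ?thesis
    using False assms by (simp add: profile_def reach_rel_append reachF_rel_append)
qed

lemma cls_eq_profile: "cls d Fs w = {u. profile u = profile w}"
  unfolding cls_def sim_def profile_def reach_rel_def reachF_rel_def by (auto simp: set_eq_iff)

lemma mem_cls_iff: "u \<in> cls d Fs w \<longleftrightarrow> profile u = profile w"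
  by (simp add: cls_eq_profile)

lemma cls_eq_iff: "cls d Fs u = cls d Fs w \<longleftrightarrow> profile u = profile w"
  by (auto simp: cls_eq_profile)

lemma cls_self [simp]: "w \<in> cls d Fs w"
  by (simp add: mem_cls_iff)

lemma cls_in_Qc [simp]: "cls d Fs w \<in> Qc d Fs"
  by (simp add: Qc_def)

lemma Qc_eq_cls: "X \<in> Qc d Fs \<Longrightarrow> x \<in> X \<Longrightarrow> X = cls d Fs x"
  unfolding Qc_def by (auto simp: mem_cls_iff cls_eq_iff)

lemma Qc_nonempty: "X \<in> Qc d Fs \<Longrightarrow> X \<noteq> {}"
  unfolding Qc_def using cls_self by blast

lemma cls_Nil: "cls d Fs [] = {[]}"
  by (simp add: cls_def)

lemma Nil_in_Qc_iff: "X \<in> Qc d Fs \<Longrightarrow> [] \<in> X \<longleftrightarrow> X = {[]}"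
  using Qc_eq_cls cls_Nil by fastforce

lemma cmul_cls [simp]: "cmul d Fs (cls d Fs u) (cls d Fs v) = cls d Fs (u @ v)"
proof -
  have "(SOME x. x \<in> cls d Fs w) \<in> cls d Fs w" for w
    by (rule someI) (rule cls_self)
  then have "profile (SOME x. x \<in> cls d Fs w) = profile w" for w
    unfolding mem_cls_iff .
  then show ?thesis
    unfolding cmul_def cls_eq_iff by (rule profile_append_cong) fact+
qed

lemma append_in_cmul:
  "x \<in> X \<Longrightarrow> y \<in> Y \<Longrightarrow> X \<in> Qc d Fs \<Longrightarrow> Y \<in> Qc d Fs \<Longrightarrow> x @ y \<in> cmul d Fs X Y"
  by (metis Qc_eq_cls cmul_cls cls_self)

lemma cmul_in_Qc: "X \<in> Qc d Fs \<Longrightarrow> Y \<in> Qc d Fs \<Longrightarrow> cmul d Fs X Y \<in> Qc d Fs"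
  unfolding Qc_def by auto

lemma cmul_assoc:
  "X \<in> Qc d Fs \<Longrightarrow> Y \<in> Qc d Fs \<Longrightarrow> Z \<in> Qc d Fs \<Longrightarrow>
   cmul d Fs (cmul d Fs X Y) Z = cmul d Fs X (cmul d Fs Y Z)"
  unfolding Qc_def by auto

lemma cmul_Nil_right: "X \<in> Qc d Fs \<Longrightarrow> cmul d Fs X {[]} = X"
  unfolding Qc_def by (auto simp flip: cls_Nil)

section \<open>Lassos and the overlap closure\<close>

lemma Cpairs_cmul_left:
  "A \<in> Qc d Fs \<Longrightarrow> (C, D) \<in> Cpairs d Fs \<Longrightarrow> (cmul d Fs A C, D) \<in> Cpairs d Fs"
  unfolding Cpairs_def by (auto simp: cmul_in_Qc cmul_assoc)

lemma Cpairs_Nil: "C \<in> Qc d Fs \<Longrightarrow> (C, {[]}) \<in> Cpairs d Fs"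
  unfolding Cpairs_def using cls_in_Qc[of "[]"] by (simp add: cls_Nil cmul_Nil_right)

lemma lasso_nonempty:
  assumes "(C, D) \<in> Cpairs d Fs"
  shows "lasso C D \<noteq> {}"
proof -
  have "C \<in> Qc d Fs" "D \<in> Qc d Fs"
    using assms by (simp_all add: Cpairs_def)
  then have "C \<noteq> {}" "D \<noteq> {}"
    by (simp_all add: Qc_nonempty)
  then obtain x y where "x \<in> C" "y \<in> D" by blast
  then have "wcat (FinW x) (inf_concat (\<lambda>_. y)) \<in> lasso C D"
    unfolding lconc_def omega_pow_def by blast
  then show ?thesis by blast
qed

lemma append_pconc_mem:
  assumes "(C, D) \<in> Cpairs d Fs" "x \<in> C" "\<forall>i. ys i \<in> D"
  shows "x @ pconc ys n \<in> C"
proof (induction n)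
  case (Suc n)
  then have "(x @ pconc ys n) @ ys n \<in> cmul d Fs C D"
    using assms by (intro append_in_cmul) (auto simp: Cpairs_def)
  then show ?case using assms(1) by (simp add: pconc_Suc Cpairs_def)
qed (use assms in simp)

lemma wcat_in_lasso_cmul:
  assumes "a \<in> A" "A \<in> Qc d Fs" "C \<in> Qc d Fs" "w \<in> lasso C D"
  shows "wcat (FinW a) w \<in> lasso (cmul d Fs A C) D"
proof -
  obtain x y where "x \<in> C" "y \<in> omega_pow D" "w = wcat (FinW x) y"
    using assms(4) unfolding lconc_def by blast
  moreover have "a @ x \<in> cmul d Fs A C"
    using append_in_cmul assms(1-3) calculation(1) by blast
  ultimately show ?thesis unfolding lconc_def by (auto simp: wcat_assoc)
qed

lemma lasso_split_prefix:
  assumes CD: "(C, D) \<in> Cpairs d Fs" and w: "wcat (FinW u) v \<in> lasso C D"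
  obtains C' where "C = cmul d Fs (cls d Fs u) C'" "(C', D) \<in> Cpairs d Fs" "v \<in> lasso C' D"
proof (cases "D = {[]}")
  case True
  then obtain y where y: "wcat (FinW u) v = FinW y" "y \<in> C"
    using w by (auto simp: lasso_Nil)
  then obtain z where z: "v = FinW z" "y = u @ z"
    by (cases v) auto
  have "C = cmul d Fs (cls d Fs u) (cls d Fs z)"
    using CD y z Qc_eq_cls[of C "u @ z"] by (simp add: Cpairs_def)
  moreover have "(cls d Fs z, D) \<in> Cpairs d Fs" "v \<in> lasso (cls d Fs z) D"
    using True z by (simp_all add: Cpairs_Nil lasso_Nil)
  ultimately show thesis by (rule that)
next
  case False
  have Q: "C \<in> Qc d Fs" "D \<in> Qc d Fs" "cmul d Fs C D = C" "cmul d Fs D D = D"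
    using CD by (simp_all add: Cpairs_def)
  obtain x ys where x: "x \<in> C" and ys: "\<forall>i. ys i \<in> D"
    and eq: "wcat (FinW u) v = wcat (FinW x) (inf_concat ys)"
    using w unfolding lconc_def omega_pow_def by blast
  have "\<forall>i. ys i \<noteq> []" using ys False Q(2) Nil_in_Qc_iff by metis
  then obtain n s where s: "x @ pconc ys n = u @ s"
    and v: "v = wcat (FinW (s @ ys n)) (inf_concat (\<lambda>i. ys (Suc n + i)))"
    using eq by (rule inf_concat_split_prefix)
  define C' where "C' = cmul d Fs (cls d Fs s) D"
  have "s @ ys n \<in> C'"
    unfolding C'_def using ys Q(2) by (intro append_in_cmul) auto
  moreover have "inf_concat (\<lambda>i. ys (Suc n + i)) \<in> omega_pow D"
    unfolding omega_pow_def using ys by blast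
  ultimately have "v \<in> lasso C' D"
    unfolding v lconc_def by blast
  moreover have "C = cls d Fs (u @ s)"
    using Qc_eq_cls[OF Q(1) append_pconc_mem[OF CD x ys, of n]] s(1) by simp
  then have "C = cmul d Fs (cls d Fs u) C'"
    unfolding C'_def using Q by (simp flip: cmul_assoc)
  moreover have "(C', D) \<in> Cpairs d Fs"
    unfolding C'_def using Q by (intro Cpairs_cmul_left) (simp_all add: Cpairs_def)
  ultimately show thesis using that by blast
qed

definition overlap :: "'a list set \<times> 'a list set \<Rightarrow> 'a list set \<times> 'a list set \<Rightarrow> bool" where
  "overlap p q \<longleftrightarrow> lasso (fst p) (snd p) \<inter> lasso (fst q) (snd q) \<noteq> {}"

lemma overlap_refl: "p \<in> Cpairs d Fs \<Longrightarrow> overlap p p"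
  unfolding overlap_def using lasso_nonempty by (cases p) auto

lemma overlap_cmul:
  assumes "A \<in> Qc d Fs" "(C, D) \<in> Cpairs d Fs" "(C', D') \<in> Cpairs d Fs" "overlap (C, D) (C', D')"
  shows "overlap (cmul d Fs A C, D) (cmul d Fs A C', D')"
proof -
  obtain a where a: "a \<in> A" using assms(1) Qc_nonempty by blast
  obtain w where w: "w \<in> lasso C D" "w \<in> lasso C' D'"
    using assms(4) unfolding overlap_def by auto
  have "C \<in> Qc d Fs" "C' \<in> Qc d Fs" using assms(2,3) by (simp_all add: Cpairs_def)
  then have "wcat (FinW a) w \<in> lasso (cmul d Fs A C) D \<inter> lasso (cmul d Fs A C') D'"
    using wcat_in_lasso_cmul[OF a assms(1)] w by blast
  then show ?thesis unfolding overlap_def by auto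
qed

lemma overlap_cmul_leftE:
  assumes A: "A \<in> Qc d Fs" and p: "(C, D) \<in> Cpairs d Fs" and q: "(C', D') \<in> Cpairs d Fs"
    and ov: "overlap (cmul d Fs A C, D) (C', D')"
  obtains C'' where "C' = cmul d Fs A C''" "(C'', D') \<in> Cpairs d Fs" "overlap (C, D) (C'', D')"
proof -
  have Q: "C \<in> Qc d Fs" using p by (simp add: Cpairs_def)
  obtain w where w: "w \<in> lasso (cmul d Fs A C) D" "w \<in> lasso C' D'"
    using ov unfolding overlap_def by auto
  then obtain x y where x: "x \<in> cmul d Fs A C" and y: "y \<in> omega_pow D"
    and wxy: "w = wcat (FinW x) y"
    unfolding lconc_def by blast
  obtain E where E: "C' = cmul d Fs (cls d Fs x) E" "(E, D') \<in> Cpairs d Fs" "y \<in> lasso E D'"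
    using lasso_split_prefix[OF q] w(2) wxy by blast
  have EQ: "E \<in> Qc d Fs" using E(2) by (simp add: Cpairs_def)
  have "C' = cmul d Fs A (cmul d Fs C E)"
    using E(1) Qc_eq_cls[OF cmul_in_Qc[OF A Q] x] A Q EQ by (simp flip: cmul_assoc)
  moreover have "(cmul d Fs C E, D') \<in> Cpairs d Fs"
    using Q E(2) by (rule Cpairs_cmul_left)
  moreover have "overlap (C, D) (cmul d Fs C E, D')"
  proof -
    obtain c where c: "c \<in> C" using Q Qc_nonempty by blast
    then have "wcat (FinW c) y \<in> lasso C D"
      using y unfolding lconc_def by blast
    moreover have "wcat (FinW c) y \<in> lasso (cmul d Fs C E) D'"
      using wcat_in_lasso_cmul[OF c Q EQ E(3)] .
    ultimately show ?thesis unfolding overlap_def by auto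
  qed
  ultimately show thesis using that by blast
qed

lemma ff_gg_iff: "q \<in> ff d Fs (gg X) \<longleftrightarrow> q \<in> Cpairs d Fs \<and> (\<exists>p\<in>X. overlap p q)"
  unfolding ff_def gg_def overlap_def by (cases q) force

lemma mem_cc_iff: "q \<in> cc d Fs X \<longleftrightarrow> (\<exists>n\<ge>1. q \<in> ((ff d Fs \<circ> gg) ^^ n) X)"
  unfolding cc_def by auto

lemma cc_step:
  assumes "p \<in> cc d Fs X" "q \<in> Cpairs d Fs" "overlap p q"
  shows "q \<in> cc d Fs X"
proof -
  obtain n where "n \<ge> 1" "p \<in> ((ff d Fs \<circ> gg) ^^ n) X"
    using assms(1) mem_cc_iff by blast
  moreover have "q \<in> ((ff d Fs \<circ> gg) ^^ Suc n) X"
    using assms(2,3) calculation(2) by (auto simp: ff_gg_iff)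
  ultimately show ?thesis unfolding mem_cc_iff by (intro exI[of _ "Suc n"]) simp
qed

lemma subset_cc:
  assumes "X \<subseteq> Cpairs d Fs"
  shows "X \<subseteq> cc d Fs X"
proof
  fix p assume "p \<in> X"
  moreover have "overlap p p" using assms calculation overlap_refl by blast
  ultimately have "p \<in> ((ff d Fs \<circ> gg) ^^ 1) X"
    using assms by (auto simp: ff_gg_iff)
  then show "p \<in> cc d Fs X" unfolding mem_cc_iff by blast
qed

lemma cc_induct:
  assumes "X \<subseteq> S" "\<And>p q. p \<in> S \<Longrightarrow> q \<in> Cpairs d Fs \<Longrightarrow> overlap p q \<Longrightarrow> q \<in> S"
  shows "cc d Fs X \<subseteq> S"
proof -
  have "((ff d Fs \<circ> gg) ^^ n) X \<subseteq> S" for n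
  proof (induction n)
    case (Suc n)
    show ?case
    proof
      fix q assume "q \<in> ((ff d Fs \<circ> gg) ^^ Suc n) X"
      then obtain p where "p \<in> ((ff d Fs \<circ> gg) ^^ n) X" "q \<in> Cpairs d Fs" "overlap p q"
        by (auto simp: ff_gg_iff)
      then show "q \<in> S" using Suc assms(2) by blast
    qed
  qed (use assms(1) in simp)
  then show ?thesis unfolding cc_def by blast
qed

lemma ff_subset_Cpairs: "ff d Fs V \<subseteq> Cpairs d Fs"
  unfolding ff_def by auto

lemma cc_subset_Cpairs: "cc d Fs X \<subseteq> Cpairs d Fs"
proof -
  have "q \<in> Cpairs d Fs" if "q \<in> ((ff d Fs \<circ> gg) ^^ n) X" "n \<ge> 1" for q n
    using that ff_subset_Cpairs by (cases n) auto
  then show ?thesis unfolding cc_def by blast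
qed

lemma cc_Un: "cc d Fs (X \<union> Y) = cc d Fs X \<union> cc d Fs Y"
proof -
  have "((ff d Fs \<circ> gg) ^^ n) (X \<union> Y) = ((ff d Fs \<circ> gg) ^^ n) X \<union> ((ff d Fs \<circ> gg) ^^ n) Y" for n
    by (induction n) (auto simp: ff_def gg_def)
  then show ?thesis unfolding cc_def by auto
qed

lemma ff_subset_alpha_om: "ff d Fs V \<subseteq> alpha_om d Fs V"
  unfolding alpha_om_def using subset_cc[OF ff_subset_Cpairs] .

section \<open>The abstraction maps\<close>

lemma cls_in_alpha_star: "u \<in> U \<Longrightarrow> cls d Fs u \<in> alpha_star d Fs U"
  unfolding alpha_star_def by (auto intro: cls_self)

lemma alpha_star_UNIV: "alpha_star d Fs UNIV = Qc d Fs"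
  unfolding alpha_star_def using Qc_nonempty by auto

lemma alpha_star_empty: "alpha_star d Fs {} = {}"
  unfolding alpha_star_def by auto

lemma alpha_star_Un: "alpha_star d Fs (U \<union> U') = alpha_star d Fs U \<union> alpha_star d Fs U'"
  unfolding alpha_star_def by auto

lemma alpha_star_lmul:
  "alpha_star d Fs (lmul U U') = amul d Fs (alpha_star d Fs U) (alpha_star d Fs U')"
proof
  show "alpha_star d Fs (lmul U U') \<subseteq> amul d Fs (alpha_star d Fs U) (alpha_star d Fs U')"
  proof
    fix C assume "C \<in> alpha_star d Fs (lmul U U')"
    then obtain u v where uv: "C \<in> Qc d Fs" "u @ v \<in> C" "u \<in> U" "v \<in> U'"
      by (auto simp: alpha_star_def lmul_def)
    then have "C = cmul d Fs (cls d Fs u) (cls d Fs v)"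
      using Qc_eq_cls by simp
    then show "C \<in> amul d Fs (alpha_star d Fs U) (alpha_star d Fs U')"
      unfolding amul_def using uv cls_in_alpha_star by blast
  qed
next
  show "amul d Fs (alpha_star d Fs U) (alpha_star d Fs U') \<subseteq> alpha_star d Fs (lmul U U')"
  proof
    fix E assume "E \<in> amul d Fs (alpha_star d Fs U) (alpha_star d Fs U')"
    then obtain C C' u v where E: "E = cmul d Fs C C'" "C \<in> Qc d Fs" "C' \<in> Qc d Fs"
      "u \<in> C" "u \<in> U" "v \<in> C'" "v \<in> U'"
      unfolding amul_def alpha_star_def by blast
    then have "u @ v \<in> E \<inter> lmul U U'"
      unfolding lmul_def using append_in_cmul by blast
    then show "E \<in> alpha_star d Fs (lmul U U')"
      unfolding alpha_star_def using E cmul_in_Qc by blast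
  qed
qed

lemma alpha_star_subset_iff: "\<U> \<subseteq> Qc d Fs \<Longrightarrow> alpha_star d Fs U \<subseteq> \<U> \<longleftrightarrow> U \<subseteq> gamma_star \<U>"
  unfolding alpha_star_def gamma_star_def using Qc_eq_cls cls_self cls_in_Qc by blast

lemma alpha_star_lfp:
  fixes \<Phi> :: "('n \<Rightarrow> 'a list set) \<Rightarrow> ('n \<Rightarrow> 'a list set)"
    and F :: "('n \<Rightarrow> 'a list set set) \<Rightarrow> ('n \<Rightarrow> 'a list set set)"
  assumes "mono \<Phi>" "mono_on {X. \<forall>i. X i \<in> M_star d Fs} F"
    and comm: "\<forall>X. (\<lambda>i. alpha_star d Fs (\<Phi> X i)) = F (\<lambda>i. alpha_star d Fs (X i))"
  shows "(\<lambda>i. alpha_star d Fs (lfp \<Phi> i)) = Inf {X. (\<forall>i. X i \<in> M_star d Fs) \<and> F X \<le> X}"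
proof -
  let ?M = "{X. \<forall>i. X i \<in> M_star d Fs}"
  have galois: "(\<lambda>i. alpha_star d Fs (Y i)) \<le> X \<longleftrightarrow> Y \<le> (\<lambda>i. gamma_star (X i))"
    if "X \<in> ?M" for X Y
    using that by (simp add: le_fun_def M_star_def alpha_star_subset_iff)
  have in_M: "(\<lambda>i. alpha_star d Fs (Y i)) \<in> ?M" for Y
    by (auto simp: M_star_def alpha_star_def)
  have "(\<lambda>i. alpha_star d Fs (lfp \<Phi> i)) = Inf {X \<in> ?M. F X \<le> X}"
    using comm by (intro lfp_abstraction[OF assms(1,2) in_M galois]) blast+
  then show ?thesis by simp
qed

lemma alpha_om_UNIV: "alpha_om d Fs UNIV = Cpairs d Fs"
proof -
  have "ff d Fs UNIV = Cpairs d Fs"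
    unfolding ff_def using lasso_nonempty by auto
  then show ?thesis
    unfolding alpha_om_def using subset_cc cc_subset_Cpairs by (metis subset_antisym order_refl)
qed

lemma alpha_om_empty: "alpha_om d Fs {} = {}"
proof -
  have "ff d Fs {} = {}" unfolding ff_def by auto
  moreover have "cc d Fs {} \<subseteq> {}" by (rule cc_induct) auto
  ultimately show ?thesis unfolding alpha_om_def by simp
qed

lemma alpha_om_Un: "alpha_om d Fs (V \<union> V') = alpha_om d Fs V \<union> alpha_om d Fs V'"
proof -
  have "ff d Fs (V \<union> V') = ff d Fs V \<union> ff d Fs V'" unfolding ff_def by auto
  then show ?thesis unfolding alpha_om_def by (simp add: cc_Un)
qed

lemma alpha_om_mono: "V \<subseteq> V' \<Longrightarrow> alpha_om d Fs V \<subseteq> alpha_om d Fs V'"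
  using alpha_om_Un[of V V'] by (simp add: sup.absorb2 sup.absorb_iff2)

lemma alpha_om_lconc_subset:
  "alpha_om d Fs (lconc U V) \<subseteq> amul_om d Fs (alpha_star d Fs U) (alpha_om d Fs V)"
  unfolding alpha_om_def[of d Fs "lconc U V"]
proof (rule cc_induct)
  show "ff d Fs (lconc U V) \<subseteq> amul_om d Fs (alpha_star d Fs U) (alpha_om d Fs V)"
  proof
    fix p assume "p \<in> ff d Fs (lconc U V)"
    then obtain C D u v where p: "p = (C, D)" "(C, D) \<in> Cpairs d Fs"
      "wcat (FinW u) v \<in> lasso C D" "u \<in> U" "v \<in> V"
      by (auto simp: ff_def lconc_def[of U V])
    then obtain C' where C': "C = cmul d Fs (cls d Fs u) C'" "(C', D) \<in> Cpairs d Fs" "v \<in> lasso C' D"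
      using lasso_split_prefix by blast
    then have "(C', D) \<in> alpha_om d Fs V"
      using ff_subset_alpha_om p(5) unfolding ff_def by blast
    then show "p \<in> amul_om d Fs (alpha_star d Fs U) (alpha_om d Fs V)"
      unfolding amul_om_def using p C' cls_in_alpha_star by blast
  qed
next
  fix p q
  assume p: "p \<in> amul_om d Fs (alpha_star d Fs U) (alpha_om d Fs V)"
    and q: "q \<in> Cpairs d Fs" and ov: "overlap p q"
  obtain A C D where pd: "p = (cmul d Fs A C, D)" "A \<in> alpha_star d Fs U" "(C, D) \<in> alpha_om d Fs V"
    using p by (auto simp: amul_om_def)
  have A: "A \<in> Qc d Fs" and CD: "(C, D) \<in> Cpairs d Fs"
    using pd cc_subset_Cpairs unfolding alpha_star_def alpha_om_def by auto
  obtain C' D' where qd: "q = (C', D')" by (cases q)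
  obtain C'' where C'': "C' = cmul d Fs A C''" "(C'', D') \<in> Cpairs d Fs" "overlap (C, D) (C'', D')"
    by (rule overlap_cmul_leftE[OF A CD q[unfolded qd] ov[unfolded pd(1) qd]])
  have "(C'', D') \<in> alpha_om d Fs V"
    using pd(3) C''(2,3) unfolding alpha_om_def by (rule cc_step)
  then show "q \<in> amul_om d Fs (alpha_star d Fs U) (alpha_om d Fs V)"
    unfolding amul_om_def qd C''(1) using pd(2) by blast
qed

lemma amul_om_subset_alpha_om_lconc:
  "amul_om d Fs (alpha_star d Fs U) (alpha_om d Fs V) \<subseteq> alpha_om d Fs (lconc U V)"
proof
  fix r assume "r \<in> amul_om d Fs (alpha_star d Fs U) (alpha_om d Fs V)"
  then obtain A C D where r: "r = (cmul d Fs A C, D)" "A \<in> alpha_star d Fs U" "(C, D) \<in> alpha_om d Fs V"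
    by (auto simp: amul_om_def)
  obtain a where a: "a \<in> A" "a \<in> U" and A: "A \<in> Qc d Fs"
    using r(2) unfolding alpha_star_def by auto
  let ?S = "{p \<in> Cpairs d Fs. (cmul d Fs A (fst p), snd p) \<in> alpha_om d Fs (lconc U V)}"
  have "cc d Fs (ff d Fs V) \<subseteq> ?S"
  proof (rule cc_induct)
    show "ff d Fs V \<subseteq> ?S"
    proof
      fix p assume "p \<in> ff d Fs V"
      then obtain C D v where p: "p = (C, D)" "(C, D) \<in> Cpairs d Fs" "v \<in> lasso C D" "v \<in> V"
        unfolding ff_def by auto
      have "wcat (FinW a) v \<in> lasso (cmul d Fs A C) D"
        using wcat_in_lasso_cmul[OF a(1) A _ p(3)] p(2) by (simp add: Cpairs_def)
      moreover have "wcat (FinW a) v \<in> lconc U V"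
        unfolding lconc_def[of U V] using a(2) p(4) by blast
      moreover have "(cmul d Fs A C, D) \<in> Cpairs d Fs"
        using Cpairs_cmul_left[OF A p(2)] .
      ultimately have "(cmul d Fs A C, D) \<in> ff d Fs (lconc U V)"
        unfolding ff_def by auto
      then show "p \<in> ?S"
        using p(1,2) ff_subset_alpha_om by auto
    qed
  next
    fix p q assume p: "p \<in> ?S" and q: "q \<in> Cpairs d Fs" and ov: "overlap p q"
    obtain C D C' D' where pq: "p = (C, D)" "q = (C', D')" by (cases p, cases q)
    have "(cmul d Fs A C, D) \<in> alpha_om d Fs (lconc U V)"
      using p pq by simp
    moreover have "(cmul d Fs A C', D') \<in> Cpairs d Fs"
      using Cpairs_cmul_left[OF A] q pq by simp
    moreover have "overlap (cmul d Fs A C, D) (cmul d Fs A C', D')"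
      using overlap_cmul[OF A] p q ov pq by simp
    ultimately have "(cmul d Fs A C', D') \<in> alpha_om d Fs (lconc U V)"
      unfolding alpha_om_def by (rule cc_step)
    then show "q \<in> ?S" using q pq by simp
  qed
  then show "r \<in> alpha_om d Fs (lconc U V)"
    using r(1,3) unfolding alpha_om_def[of d Fs V] by auto
qed

lemma alpha_om_lconc:
  "alpha_om d Fs (lconc U V) = amul_om d Fs (alpha_star d Fs U) (alpha_om d Fs V)"
  using alpha_om_lconc_subset amul_om_subset_alpha_om_lconc by (rule subset_antisym)

lemma mem_gamma_alpha_starE:
  assumes "w \<in> gamma_star (alpha_star d Fs U)"
  obtains u where "u \<in> U" "cls d Fs w = cls d Fs u"
proof -
  obtain C u where "C \<in> Qc d Fs" "w \<in> C" "u \<in> C" "u \<in> U"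
    using assms unfolding gamma_star_def alpha_star_def by blast
  then show thesis using that Qc_eq_cls by metis
qed

lemma cls_concat_upt_cong:
  assumes "\<forall>i. cls d Fs (ws i) = cls d Fs (us i)"
  shows "cls d Fs (concat_upt ws i j) = cls d Fs (concat_upt us i j)"
proof (induction j)
  case (Suc j)
  then show ?case
    using assms by (cases "i \<le> j") (simp_all add: concat_upt_def flip: cmul_cls)
qed (simp add: concat_upt_def)

lemma lasso_of_homogeneous_blocks:
  fixes e :: "nat \<Rightarrow> nat"
  assumes inf: "\<exists>\<^sub>\<infinity>i. ws i \<noteq> []" and e: "strict_mono e"
    and D: "\<And>i j. i < j \<Longrightarrow> cls d Fs (concat_upt ws (e i) (e j)) = D"
  shows "(cls d Fs (pconc ws (e 1)), D) \<in> Cpairs d Fs"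
    and "inf_concat ws \<in> lasso (cls d Fs (pconc ws (e 1))) D"
proof -
  have e_le: "e i \<le> e j" if "i \<le> j" for i j
    using e that by (simp add: strict_mono_less_eq)
  have DQ: "D \<in> Qc d Fs" and DD: "cmul d Fs D D = D"
    using D[of 0 1] D[of 1 2] D[of 0 2] e_le[of 0 1] e_le[of 1 2]
      concat_upt_split[of "e 0" "e 1" "e 2" ws] by (auto simp flip: cmul_cls)
  let ?C = "cls d Fs (pconc ws (e 1))"
  have pconc_e: "cls d Fs (pconc ws (e j)) = cmul d Fs (cls d Fs (pconc ws (e 0))) D" if "j > 0" for j
    using D[OF that] concat_upt_split[of 0 "e 0" "e j" ws] e_le[of 0 j]
    by (simp add: pconc_eq_concat_upt flip: cmul_cls)
  have CD: "cmul d Fs ?C D = ?C"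
    using pconc_e[of 1] pconc_e[of 2] DQ DD by (simp add: cmul_assoc)
  then show "(?C, D) \<in> Cpairs d Fs"
    using DQ DD by (simp add: Cpairs_def)
  have "concat_upt ws (e (Suc i)) (e (Suc (Suc i))) \<in> D" for i
    using D[of "Suc i" "Suc (Suc i)"] cls_self by blast
  then have "inf_concat (\<lambda>i. concat_upt ws (e (Suc i)) (e (Suc (Suc i)))) \<in> omega_pow D"
    unfolding omega_pow_def by blast
  then show "inf_concat ws \<in> lasso ?C D"
    unfolding inf_concat_regroup[OF inf e] lconc_def using cls_self by blast
qed

end

lemma finite_Qc: "finite (Qc (d :: 's::finite \<Rightarrow> 'a \<Rightarrow> 's set) Fs)"
proof -
  have "Qc d Fs = (\<lambda>k. {u. profile d Fs u = k}) ` range (profile d Fs)"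
    unfolding Qc_def by (auto simp: cls_eq_profile)
  then show ?thesis by simp
qed

lemma common_lasso:
  fixes d :: "'s::finite \<Rightarrow> 'a \<Rightarrow> 's set"
  assumes eq: "\<forall>i. cls d Fs (ws i) = cls d Fs (us i)"
  obtains C D where "(C, D) \<in> Cpairs d Fs" "inf_concat ws \<in> lasso C D" "inf_concat us \<in> lasso C D"
proof -
  have empty_iff: "ws i = [] \<longleftrightarrow> us i = []" for i
    using eq cls_eq_iff profile_eq_None_iff by metis
  have pconc_cls: "cls d Fs (pconc us n) = cls d Fs (pconc ws n)" for n
    using cls_concat_upt_cong[OF eq] by (simp add: pconc_eq_concat_upt)
  show thesis
  proof (cases "\<exists>\<^sub>\<infinity>i. ws i \<noteq> []")
    case True
    then have inf_us: "\<exists>\<^sub>\<infinity>i. us i \<noteq> []" using empty_iff by simp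
    obtain e :: "nat \<Rightarrow> nat" where e: "strict_mono e"
      and hom: "\<And>i j. i < j \<Longrightarrow>
        cls d Fs (concat_upt ws (e i) (e j)) = cls d Fs (concat_upt ws (e 0) (e 1))"
      by (rule ramsey_pairs_nat[where c = "\<lambda>i j. cls d Fs (concat_upt ws i j)",
            OF finite_Qc[of d Fs] cls_in_Qc]) blast
    have hom_us: "cls d Fs (concat_upt us (e i) (e j)) = cls d Fs (concat_upt ws (e 0) (e 1))"
      if "i < j" for i j
      using hom[OF that] cls_concat_upt_cong[OF eq] by simp
    show thesis
      using that lasso_of_homogeneous_blocks[OF True e hom]
        lasso_of_homogeneous_blocks[OF inf_us e hom_us] pconc_cls by metis
  next
    case False
    have "(\<lambda>n. \<forall>i\<ge>n. ws i = []) = (\<lambda>n. \<forall>i\<ge>n. us i = [])"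
      using empty_iff by simp
    then obtain n where "inf_concat ws = FinW (pconc ws n)" "inf_concat us = FinW (pconc us n)"
      using False empty_iff unfolding inf_concat_def INFM_nat_le by auto
    moreover have "pconc us n \<in> cls d Fs (pconc ws n)"
      using pconc_cls cls_self by metis
    ultimately show thesis
      using that[of "cls d Fs (pconc ws n)" "{[]}"] Cpairs_Nil[OF cls_in_Qc, of d Fs "pconc ws n"]
      by (simp add: lasso_Nil image_iff)
  qed
qed

lemma alpha_om_omega_pow:
  fixes d :: "'s::finite \<Rightarrow> 'a \<Rightarrow> 's set"
  shows "alpha_om d Fs (omega_pow U) = aomega d Fs (alpha_star d Fs U)"
proof
  have "alpha_star d Fs U \<subseteq> Qc d Fs" by (auto simp: alpha_star_def)
  then have "U \<subseteq> gamma_star (alpha_star d Fs U)"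
    using alpha_star_subset_iff by blast
  then show "alpha_om d Fs (omega_pow U) \<subseteq> aomega d Fs (alpha_star d Fs U)"
    unfolding aomega_def omega_pow_def by (intro alpha_om_mono) blast
next
  let ?cc = "cc d Fs (ff d Fs (omega_pow U))"
  have "cc d Fs (ff d Fs (omega_pow (gamma_star (alpha_star d Fs U)))) \<subseteq> ?cc"
  proof (rule cc_induct)
    show "ff d Fs (omega_pow (gamma_star (alpha_star d Fs U))) \<subseteq> ?cc"
    proof
      fix p assume "p \<in> ff d Fs (omega_pow (gamma_star (alpha_star d Fs U)))"
      then obtain C D ws where p: "p = (C, D)" "p \<in> Cpairs d Fs" "inf_concat ws \<in> lasso C D"
        and ws: "\<forall>i. ws i \<in> gamma_star (alpha_star d Fs U)"
        by (auto simp: ff_def omega_pow_def)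
      have "\<forall>i. \<exists>u. u \<in> U \<and> cls d Fs (ws i) = cls d Fs u"
        using ws mem_gamma_alpha_starE by metis
      then obtain us where us: "\<forall>i. us i \<in> U" "\<forall>i. cls d Fs (ws i) = cls d Fs (us i)"
        by metis
      obtain C' D' where q: "(C', D') \<in> Cpairs d Fs" "inf_concat ws \<in> lasso C' D'"
        "inf_concat us \<in> lasso C' D'"
        using common_lasso[OF us(2)] by blast
      have "inf_concat us \<in> omega_pow U" unfolding omega_pow_def using us(1) by blast
      then have "(C', D') \<in> ?cc"
        using q ff_subset_alpha_om unfolding ff_def alpha_om_def by blast
      moreover note p(2)
      moreover have "overlap (C', D') p" unfolding overlap_def using p q by auto
      ultimately show "p \<in> ?cc" by (rule cc_step)
    qed
  qed (rule cc_step)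
  then show "aomega d Fs (alpha_star d Fs U) \<subseteq> alpha_om d Fs (omega_pow U)"
    unfolding aomega_def alpha_om_def .
qed

theorem theorem12:
  fixes d :: "'s::finite \<Rightarrow> 'a::finite \<Rightarrow> 's set" and q0 :: 's and Fs :: "'s set"
  shows
    "(alpha_star d Fs UNIV = Qc d Fs \<and> alpha_om d Fs UNIV = Cpairs d Fs \<and>
      alpha_star d Fs {} = {} \<and> alpha_om d Fs {} = {})
   \<and> (\<forall>U U'. alpha_star d Fs (U \<union> U') = alpha_star d Fs U \<union> alpha_star d Fs U')
   \<and> (\<forall>V V'. alpha_om d Fs (V \<union> V') = alpha_om d Fs V \<union> alpha_om d Fs V')
   \<and> (\<forall>U U'. alpha_star d Fs (lmul U U') = amul d Fs (alpha_star d Fs U) (alpha_star d Fs U'))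
   \<and> (\<forall>U V. alpha_om d Fs (lconc U V) = amul_om d Fs (alpha_star d Fs U) (alpha_om d Fs V))
   \<and> (\<forall>(\<Phi> :: ('n::finite \<Rightarrow> 'a list set) \<Rightarrow> ('n \<Rightarrow> 'a list set))
        (F :: ('n \<Rightarrow> 'a list set set) \<Rightarrow> ('n \<Rightarrow> 'a list set set)).
         mono \<Phi> \<longrightarrow>
         (\<forall>X. (\<forall>i. X i \<in> M_star d Fs) \<longrightarrow> (\<forall>i. F X i \<in> M_star d Fs)) \<longrightarrow>
         mono_on {X. \<forall>i. X i \<in> M_star d Fs} F \<longrightarrow>
         (\<forall>X. (\<lambda>i. alpha_star d Fs (\<Phi> X i)) = F (\<lambda>i. alpha_star d Fs (X i))) \<longrightarrow>
         (\<lambda>i. alpha_star d Fs (lfp \<Phi> i)) = Inf {X. (\<forall>i. X i \<in> M_star d Fs) \<and> F X \<le> X})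
   \<and> (\<forall>U. alpha_om d Fs (omega_pow U) = aomega d Fs (alpha_star d Fs U))"
  by (simp add: alpha_star_UNIV alpha_om_UNIV alpha_star_empty alpha_om_empty alpha_star_Un
      alpha_om_Un alpha_star_lmul alpha_om_lconc alpha_star_lfp alpha_om_omega_pow)

end
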